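(* Let $B$ be a supersoluble brace. If $B$ is left-nilpotent and $\operatorname{Ker}(\lambda)\le Z_n(B,\cdot)$ for some $n\in\mathbb{N}$, then $(B,\cdot)$ is nilpotent.
   Context: A brace (skew left brace) is a set $B$ with two binary operations $+$ and $\cdot$ such that $(B,+)$ and $(B,\cdot)$ are groups and $a(b+c)=ab-a+ac$ for all $a,b,c\in B$. $\lambda_a(b)=-a+ab$ defines a homomorphism $\lambda\colon(B,\cdot)\to\operatorname{Aut}(B,+)$; $a*b=-a+ab-b$; for subsets $X,Y$, $X*Y$ is the subgroup of $(B,+)$ generated by all $x*y$, $x\in X,y\in Y$. $B$ is left-nilpotent if, with $L_0=B$ and $L_{k+1}=B*L_k$, one has $L_m=\{0\}$ for some $m$. $Z_n(B,\cdot)$ is the $n$-th term of the upper central series of the group $(B,\cdot)$. An ideal is a subset that is a subgroup of both groups, normal in both, and invariant under all $\lambda_b$; quotients by ideals are braces. $\operatorname{Soc}(B)=\operatorname{Ker}\lambda\cap Z(B,+)$. $B$ is supersoluble if there is a finite chain of ideals $\{0\}=I_0\le\dots\le I_n=B$ such that for each $i$, either $(I_{i+1}/I_i,+)$ is infinite cyclic and $I_{i+1}/I_i\le\operatorname{Soc}(B/I_i)$, or $I_{i+1}/I_i$ has prime order. *)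

theory Defs
  imports "HOL-Algebra.Algebra"
begin

text \<open>A (skew left) brace is given by two group structures A (the additive group (B,+))
and M (the multiplicative group (B,.)) on the same carrier B.\<close>

definition brace :: "'a monoid \<Rightarrow> 'a monoid \<Rightarrow> bool" where
  "brace A M \<longleftrightarrow> group A \<and> group M \<and> carrier A = carrier M \<and>
     (\<forall>a\<in>carrier A. \<forall>b\<in>carrier A. \<forall>c\<in>carrier A.
        a \<otimes>\<^bsub>M\<^esub> (b \<otimes>\<^bsub>A\<^esub> c)
          = (a \<otimes>\<^bsub>M\<^esub> b) \<otimes>\<^bsub>A\<^esub> inv\<^bsub>A\<^esub> a \<otimes>\<^bsub>A\<^esub> (a \<otimes>\<^bsub>M\<^esub> c))"

definition brace_lambda :: "'a monoid \<Rightarrow> 'a monoid \<Rightarrow> 'a \<Rightarrow> 'a \<Rightarrow> 'a" where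
  "brace_lambda A M a b = inv\<^bsub>A\<^esub> a \<otimes>\<^bsub>A\<^esub> (a \<otimes>\<^bsub>M\<^esub> b)"

definition brace_star :: "'a monoid \<Rightarrow> 'a monoid \<Rightarrow> 'a \<Rightarrow> 'a \<Rightarrow> 'a" where
  "brace_star A M a b = inv\<^bsub>A\<^esub> a \<otimes>\<^bsub>A\<^esub> (a \<otimes>\<^bsub>M\<^esub> b) \<otimes>\<^bsub>A\<^esub> inv\<^bsub>A\<^esub> b"

definition brace_star_set :: "'a monoid \<Rightarrow> 'a monoid \<Rightarrow> 'a set \<Rightarrow> 'a set \<Rightarrow> 'a set" where
  "brace_star_set A M S T = generate A ((\<lambda>(x, y). brace_star A M x y) ` (S \<times> T))"

fun left_series :: "'a monoid \<Rightarrow> 'a monoid \<Rightarrow> nat \<Rightarrow> 'a set" where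
  "left_series A M 0 = carrier A"
| "left_series A M (Suc k) = brace_star_set A M (carrier A) (left_series A M k)"

definition left_nilpotent :: "'a monoid \<Rightarrow> 'a monoid \<Rightarrow> bool" where
  "left_nilpotent A M \<longleftrightarrow> (\<exists>m. left_series A M m = {\<one>\<^bsub>A\<^esub>})"

definition brace_ker_lambda :: "'a monoid \<Rightarrow> 'a monoid \<Rightarrow> 'a set" where
  "brace_ker_lambda A M = {a \<in> carrier A. \<forall>b\<in>carrier A. brace_lambda A M a b = b}"

definition group_center :: "('a, 'b) monoid_scheme \<Rightarrow> 'a set" where
  "group_center G = {x \<in> carrier G. \<forall>y\<in>carrier G. x \<otimes>\<^bsub>G\<^esub> y = y \<otimes>\<^bsub>G\<^esub> x}"

definition brace_soc :: "'a monoid \<Rightarrow> 'a monoid \<Rightarrow> 'a set" where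
  "brace_soc A M = brace_ker_lambda A M \<inter> group_center A"

definition brace_ideal :: "'a monoid \<Rightarrow> 'a monoid \<Rightarrow> 'a set \<Rightarrow> bool" where
  "brace_ideal A M I \<longleftrightarrow> subgroup I A \<and> subgroup I M \<and> I \<lhd> A \<and> I \<lhd> M \<and>
     (\<forall>b\<in>carrier A. \<forall>x\<in>I. brace_lambda A M b x \<in> I)"

text \<open>Quotient brace B/I: carrier the cosets x+I (which coincide with xI for an ideal);
 addition and multiplication of cosets as complex products.\<close>
definition quot_add :: "'a monoid \<Rightarrow> 'a set \<Rightarrow> 'a set monoid" where
  "quot_add A I = A Mod I"

definition quot_mult :: "'a monoid \<Rightarrow> 'a monoid \<Rightarrow> 'a set \<Rightarrow> 'a set monoid" where
  "quot_mult A M I = \<lparr>carrier = rcosets\<^bsub>A\<^esub> I, monoid.mult = set_mult M, one = I\<rparr>"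

definition quot_sub :: "'a monoid \<Rightarrow> 'a set \<Rightarrow> 'a set \<Rightarrow> 'a set set" where
  "quot_sub A I J = (\<lambda>x. I #>\<^bsub>A\<^esub> x) ` J"

definition supersoluble_brace :: "'a monoid \<Rightarrow> 'a monoid \<Rightarrow> bool" where
  "supersoluble_brace A M \<longleftrightarrow> brace A M \<and>
    (\<exists>(I :: nat \<Rightarrow> 'a set) n. I 0 = {\<one>\<^bsub>A\<^esub>} \<and> I n = carrier A \<and>
      (\<forall>i\<le>n. brace_ideal A M (I i)) \<and>
      (\<forall>i<n. I i \<subseteq> I (Suc i) \<and>
         (let F = quot_sub A (I i) (I (Suc i)) in
           (infinite F \<and> (\<exists>g\<in>F. generate (quot_add A (I i)) {g} = F) \<and>
              F \<subseteq> brace_soc (quot_add A (I i)) (quot_mult A M (I i)))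
           \<or> Factorial_Ring.prime (card F))))"

text \<open>Upper central series of a group: Z_0 = 1, Z_(k+1)/Z_k = Z(G/Z_k).\<close>
fun upper_central :: "('a, 'b) monoid_scheme \<Rightarrow> nat \<Rightarrow> 'a set" where
  "upper_central G 0 = {\<one>\<^bsub>G\<^esub>}"
| "upper_central G (Suc k) = {x \<in> carrier G. \<forall>y\<in>carrier G.
      x \<otimes>\<^bsub>G\<^esub> y \<otimes>\<^bsub>G\<^esub> inv\<^bsub>G\<^esub> x \<otimes>\<^bsub>G\<^esub> inv\<^bsub>G\<^esub> y \<in> upper_central G k}"

definition nilpotent_group :: "('a, 'b) monoid_scheme \<Rightarrow> bool" where
  "nilpotent_group G \<longleftrightarrow> group G \<and> (\<exists>c. upper_central G c = carrier G)"

end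

theory Submission
  imports Defs
begin

text \<open>
  Let \<open>0 = I\<^sub>0 \<le> \<dots> \<le> I\<^sub>n = B\<close> be the ideal series. Every \<open>\<lambda>\<^sub>b\<close> stabilises the
  series, and on a cyclic factor of infinite or prime order it acts as a power \<open>x \<mapsto> x\<^sup>t\<close>.
  If this power were not the identity, \<open>y \<mapsto> b * y = \<lambda>\<^sub>b(y) - y\<close> would act on the factor
  as the injective map \<open>x \<mapsto> x\<^sup>t\<^sup>-\<^sup>1\<close>, so iterating \<open>b * _\<close> on an element outside
  \<open>I\<^sub>i\<close> would never reach \<open>0\<close>, against left nilpotency. Hence every \<open>\<lambda>\<^sub>b\<close> acts
  trivially on all factors: \<open>\<lambda>\<^sub>b(x) - x \<in> I\<^sub>j\<close> for \<open>x \<in> I\<^sub>j\<^sub>+\<^sub>1\<close>.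

  Call \<open>\<lambda>\<^sub>b\<close> \<open>a\<close>-lowering if \<open>\<lambda>\<^sub>b(x) - x \<in> I\<^sub>j\<close> for \<open>x \<in> I\<^sub>j\<^sub>+\<^sub>a\<close>. As in the
  theory of stability groups, if \<open>\<lambda>\<^sub>b\<close> is \<open>a\<close>-lowering and \<open>\<lambda>\<^sub>y\<close> is 1-lowering, then
  \<open>\<lambda>\<^bsub>[b,y]\<^esub> = [\<lambda>\<^sub>b,\<lambda>\<^sub>y]\<close> is \<open>(a+1)\<close>-lowering. An \<open>n\<close>-lowering \<open>\<lambda>\<^sub>b\<close> is the identity,
  so \<open>b \<in> Ker \<lambda> \<le> Z\<^sub>N(B,\<cdot>)\<close>, and descending induction gives \<open>B = Z\<^sub>N\<^sub>+\<^sub>n(B,\<cdot>)\<close>.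
\<close>

section \<open>Cyclic factors of infinite or prime order\<close>

definition infinite_or_prime_cyclic :: "('a, 'b) monoid_scheme \<Rightarrow> 'a set \<Rightarrow> bool" where
  "infinite_or_prime_cyclic G F \<longleftrightarrow>
     (infinite F \<and> (\<exists>g\<in>F. generate G {g} = F)) \<or> Factorial_Ring.prime (card F)"

context group
begin

lemma infinite_or_prime_cyclic_generator:
  assumes F: "subgroup F G" and cyclic: "infinite_or_prime_cyclic G F"
  obtains g where "g \<in> F" "generate G {g} = F" "ord g = 0 \<or> Factorial_Ring.prime (ord g)"
proof -
  consider (infinite) "infinite F" "\<exists>g\<in>F. generate G {g} = F"
    | (prime) "Factorial_Ring.prime (card F)"
    using cyclic unfolding infinite_or_prime_cyclic_def by blast
  then show thesis
  proof cases
    case infinite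
    then obtain g where g: "g \<in> F" "generate G {g} = F" by blast
    then have "ord g = 0"
      using generate_pow_card[of g] infinite subgroup.mem_carrier[OF F] by simp
    then show thesis using that g by blast
  next
    case prime
    then have "finite F" by (metis card.infinite not_prime_0)
    have "\<not> F \<subseteq> {\<one>}"
      using card_mono[of "{\<one>}" F] prime_gt_1_nat[OF prime] by auto
    then obtain h where h: "h \<in> F" "h \<noteq> \<one>" by blast
    have hG: "h \<in> carrier G" using subgroup.mem_carrier[OF F h(1)] .
    have gen_sub: "generate G {h} \<subseteq> F"
      using generate_subgroup_incl[OF _ F] h(1) by blast
    interpret F: group "G\<lparr>carrier := F\<rparr>" using subgroup.subgroup_is_group[OF F is_group] .
    have "subgroup (generate G {h}) (G\<lparr>carrier := F\<rparr>)"
      using subgroup_incl[OF generate_is_subgroup F gen_sub] hG by blast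
    then have "card (generate G {h}) dvd card F"
      using F.lagrange[of "generate G {h}"] by (simp add: order_def) (metis dvd_triv_right)
    then have "ord h = card F"
      using prime ord_eq_1[OF hG] h(2) generate_pow_card[OF hG] unfolding prime_nat_iff by auto
    moreover have "generate G {h} = F"
      using card_subset_eq[OF \<open>finite F\<close> gen_sub] calculation generate_pow_card[OF hG] by simp
    ultimately show thesis using that h prime by metis
  qed
qed

lemma int_pow_ne_one_on_prime_or_infinite_cyclic:
  assumes g: "g \<in> carrier G" "ord g = 0 \<or> Factorial_Ring.prime (ord g)"
    and x: "x \<in> generate G {g}" "x [^] s \<noteq> \<one>"
    and y: "y \<in> generate G {g}" "y \<noteq> \<one>"
  shows "y [^] (s::int) \<noteq> \<one>"
proof -
  obtain a c :: int where a: "x = g [^] a" and c: "y = g [^] c"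
    using x(1) y(1) generate_pow[OF g(1)] by blast
  have "\<not> int (ord g) dvd a * s"
    using x(2) int_pow_eq_id[OF g(1)] by (simp add: a int_pow_pow[OF g(1)])
  then have s: "\<not> int (ord g) dvd s" by (meson dvd_mult)
  have "\<not> int (ord g) dvd c"
    using y(2) int_pow_eq_id[OF g(1)] by (simp add: c)
  with s have "\<not> int (ord g) dvd c * s"
    using g(2) by (auto simp: prime_dvd_mult_iff)
  then show ?thesis
    using int_pow_eq_id[OF g(1)] by (simp add: c int_pow_pow[OF g(1)])
qed

end

context normal
begin

lemma mult_inv_mem_iff_inv_mult_mem:
  assumes "x \<in> carrier G" "y \<in> carrier G"
  shows "x \<otimes> inv y \<in> H \<longleftrightarrow> inv y \<otimes> x \<in> H"
proof
  assume "x \<otimes> inv y \<in> H"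
  then have "inv y \<otimes> (x \<otimes> inv y) \<otimes> y \<in> H" using inv_op_closed1 assms(2) by blast
  then show "inv y \<otimes> x \<in> H" using assms by (simp add: m_assoc)
next
  assume "inv y \<otimes> x \<in> H"
  then have "y \<otimes> (inv y \<otimes> x) \<otimes> inv y \<in> H" using inv_op_closed2 assms(2) by blast
  then show "x \<otimes> inv y \<in> H" using assms by (simp add: m_assoc[symmetric])
qed

lemma r_coset_eq_iff:
  assumes "x \<in> carrier G" "y \<in> carrier G"
  shows "H #> x = H #> y \<longleftrightarrow> x \<otimes> inv y \<in> H"
  using assms rcos_module[OF is_group] rcos_self[OF _ subgroup_axioms]
    repr_independence[OF _ _ subgroup_axioms] by metis

lemma r_coset_eq_self_iff:
  assumes "x \<in> carrier G"
  shows "H #> x = H \<longleftrightarrow> x \<in> H"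
  using assms coset_join1 coset_join2 subgroup_axioms by blast

lemma endo_int_pow_on_cyclic_factor:
  assumes f: "f \<in> hom G G" "f ` H \<subseteq> H"
    and K: "subgroup K G" "f ` K \<subseteq> K"
    and g: "g \<in> K" "generate (G Mod H) {H #> g} = (#>) H ` K"
  obtains t :: int where "\<And>x. x \<in> K \<Longrightarrow> H #> f x = (H #> x) [^]\<^bsub>G Mod H\<^esub> t"
proof -
  interpret Q: group "G Mod H" by (rule factorgroup_is_group)
  interpret f: group_hom G G f by (simp add: group_hom_def group_hom_axioms_def f(1) is_group)
  have KG: "\<And>x. x \<in> K \<Longrightarrow> x \<in> carrier G" using subgroup.mem_carrier[OF K(1)] .
  have gQ: "H #> g \<in> carrier (G Mod H)"
    using KG g(1) by (simp add: carrier_FactGroup)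
  have powers: "(#>) H ` K = {(H #> g) [^]\<^bsub>G Mod H\<^esub> k | k::int. True}"
    using Q.generate_pow[OF gQ] g(2) by simp
  have "H #> f g \<in> (#>) H ` K" using K(2) g(1) by blast
  then obtain t :: int where t: "H #> f g = (H #> g) [^]\<^bsub>G Mod H\<^esub> t"
    unfolding powers by blast
  have "H #> f x = (H #> x) [^]\<^bsub>G Mod H\<^esub> t" if x: "x \<in> K" for x
  proof -
    obtain k :: int where k: "H #> x = (H #> g) [^]\<^bsub>G Mod H\<^esub> k"
      using powers x by blast
    have gk: "g [^] k \<in> carrier G" using KG g(1) by simp
    have "H #> x = H #> g [^] k"
      using k FactGroup_int_pow KG g(1) by simp
    then have "x \<otimes> inv (g [^] k) \<in> H"
      using r_coset_eq_iff KG x gk by blast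
    then have "f x \<otimes> inv (f (g [^] k)) \<in> H"
      using f(2) KG x gk by force
    then have "H #> f x = H #> f (g [^] k)"
      using r_coset_eq_iff KG x gk f.hom_closed by blast
    also have "\<dots> = (H #> f g) [^]\<^bsub>G Mod H\<^esub> k"
      using KG g(1) by (simp add: f.hom_int_pow FactGroup_int_pow)
    also have "\<dots> = ((H #> g) [^]\<^bsub>G Mod H\<^esub> k) [^]\<^bsub>G Mod H\<^esub> t"
      using gQ by (simp add: t Q.int_pow_pow mult.commute)
    finally show ?thesis using k by simp
  qed
  then show thesis using that by blast
qed

lemma cyclic_factor_endo_fixed_point_free:
  assumes f: "f \<in> hom G G" "f ` H \<subseteq> H"
    and K: "subgroup K G" "f ` K \<subseteq> K"
    and cyclic: "infinite_or_prime_cyclic (G Mod H) ((#>) H ` K)"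
    and moved: "x \<in> K" "f x \<otimes> inv x \<notin> H"
    and y: "y \<in> K" "y \<notin> H"
  shows "f y \<otimes> inv y \<notin> H"
proof -
  interpret Q: group "G Mod H" by (rule factorgroup_is_group)
  interpret \<pi>: group_hom G "G Mod H" "(#>) H"
    using r_coset_hom_Mod by (simp add: group_hom_def group_hom_axioms_def is_group Q.is_group)
  have KG: "\<And>x. x \<in> K \<Longrightarrow> x \<in> carrier G" using subgroup.mem_carrier[OF K(1)] .
  have fG: "\<And>x. x \<in> carrier G \<Longrightarrow> f x \<in> carrier G" using hom_in_carrier[OF f(1)] .
  obtain C where C: "C \<in> (#>) H ` K" "generate (G Mod H) {C} = (#>) H ` K"
    and ord: "Q.ord C = 0 \<or> Factorial_Ring.prime (Q.ord C)"
    using Q.infinite_or_prime_cyclic_generator[OF \<pi>.subgroup_img_is_subgroup[OF K(1)] cyclic] .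
  then obtain g where g: "g \<in> K" "C = H #> g" by blast
  obtain t :: int where t: "\<And>x. x \<in> K \<Longrightarrow> H #> f x = (H #> x) [^]\<^bsub>G Mod H\<^esub> t"
    using endo_int_pow_on_cyclic_factor[OF f K g(1)] C(2) g(2) by blast
  have displacement: "H #> (f z \<otimes> inv z) = (H #> z) [^]\<^bsub>G Mod H\<^esub> (t - 1)" if "z \<in> K" for z
    using that KG fG t[OF that] Q.int_pow_diff[of "H #> z" t 1] by simp
  have "(H #> x) [^]\<^bsub>G Mod H\<^esub> (t - 1) \<noteq> \<one>\<^bsub>G Mod H\<^esub>"
    using moved r_coset_eq_self_iff[of "f x \<otimes> inv x"] KG fG
    by (simp flip: displacement[OF moved(1)])
  moreover have "H #> y \<noteq> \<one>\<^bsub>G Mod H\<^esub>"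
    using y r_coset_eq_self_iff KG by simp
  ultimately have "(H #> y) [^]\<^bsub>G Mod H\<^esub> (t - 1) \<noteq> \<one>\<^bsub>G Mod H\<^esub>"
    using Q.int_pow_ne_one_on_prime_or_infinite_cyclic[of C] C g ord moved(1) y(1) KG by auto
  then show ?thesis
    using y r_coset_eq_self_iff[of "f y \<otimes> inv y"] KG fG
    by (simp flip: displacement[OF y(1)])
qed

end

section \<open>Endomorphisms lowering a normal series\<close>

definition lowers_series ::
    "('a, 'b) monoid_scheme \<Rightarrow> (nat \<Rightarrow> 'a set) \<Rightarrow> nat \<Rightarrow> nat \<Rightarrow> ('a \<Rightarrow> 'a) \<Rightarrow> bool"
  where "lowers_series G I n a f \<longleftrightarrow>
    (\<forall>j x. j + a \<le> n \<longrightarrow> x \<in> I (j + a) \<longrightarrow> f x \<otimes>\<^bsub>G\<^esub> inv\<^bsub>G\<^esub> x \<in> I j)"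

lemma (in group) lowers_series_inv_mult_mem:
  assumes normal: "\<And>i. i \<le> n \<Longrightarrow> I i \<lhd> G"
    and f: "f \<in> hom G G" "lowers_series G I n a f"
    and x: "j + a \<le> n" "x \<in> I (j + a)"
  shows "inv x \<otimes> f x \<in> I j"
proof -
  have j: "j \<le> n" using x(1) by simp
  have xG: "x \<in> carrier G"
    using subgroup.mem_carrier[OF normal_imp_subgroup[OF normal[OF x(1)]] x(2)] .
  have "f x \<otimes> inv x \<in> I j"
    using f(2) x unfolding lowers_series_def by blast
  then show ?thesis
    using normal.mult_inv_mem_iff_inv_mult_mem[OF normal[OF j] hom_in_carrier[OF f(1) xG] xG] by simp
qed

lemma (in group) lowers_series_commutator:
  assumes normal: "\<And>i. i \<le> n \<Longrightarrow> I i \<lhd> G"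
    and f: "f \<in> hom G G" "lowers_series G I n a f"
    and g: "g \<in> hom G G" "lowers_series G I n 1 g"
    and x: "j + Suc a \<le> n" "x \<in> I (j + Suc a)"
  shows "f (g x) \<otimes> inv (g (f x)) \<in> I j"
proof -
  interpret f: group_hom G G f by (simp add: group_hom_def group_hom_axioms_def f(1) is_group)
  interpret g: group_hom G G g by (simp add: group_hom_def group_hom_axioms_def g(1) is_group)
  have sub: "\<And>i. i \<le> n \<Longrightarrow> I i \<subseteq> carrier G"
    using normal normal_imp_subgroup subgroup.subset by blast
  define w where "w = f x \<otimes> inv x"
  define v where "v = inv x \<otimes> g x"
  define e where "e = inv v \<otimes> f v"
  define e' where "e' = inv w \<otimes> g w"
  have w: "w \<in> I (Suc j)"
    using f(2) x unfolding lowers_series_def w_def by (metis add_Suc add_Suc_right)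
  have v: "v \<in> I (j + a)"
    using lowers_series_inv_mult_mem[OF normal g, of "j + a"] x unfolding v_def by simp
  have e: "e \<in> I j"
    using lowers_series_inv_mult_mem[OF normal f, of j] v x unfolding e_def by simp
  have e': "e' \<in> I j"
    using lowers_series_inv_mult_mem[OF normal g, of j] w x unfolding e'_def by simp
  have xG: "x \<in> carrier G" and wG: "w \<in> carrier G" and vG: "v \<in> carrier G"
    and eG: "e \<in> carrier G" and e'G: "e' \<in> carrier G"
    using sub[of "j + Suc a"] sub[of "Suc j"] sub[of "j + a"] sub[of j] x w v e e' by auto
  txt \<open>The two composites differ by a conjugate of \<open>e'\<^sup>-\<^sup>1\<close> times \<open>e\<close>.\<close>
  have gx: "g x = x \<otimes> v" unfolding v_def using xG by (simp add: m_assoc[symmetric])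
  have fx: "f x = w \<otimes> x" unfolding w_def using xG by (simp add: m_assoc)
  have fv: "f v = v \<otimes> e" unfolding e_def using vG by (simp add: m_assoc[symmetric])
  have gw: "g w = w \<otimes> e'" unfolding e'_def using wG by (simp add: m_assoc[symmetric])
  have "f (g x) = (w \<otimes> x) \<otimes> (v \<otimes> e)" using gx fx fv xG vG by simp
  moreover have "g (f x) = (w \<otimes> e') \<otimes> (x \<otimes> v)" using gx fx gw xG wG by simp
  ultimately have "inv (g (f x)) \<otimes> f (g x) = inv (x \<otimes> v) \<otimes> inv e' \<otimes> (x \<otimes> v) \<otimes> e"
    using xG vG wG eG e'G by (simp add: m_assoc inv_mult_group) (simp add: m_assoc[symmetric])
  also have "\<dots> \<in> I j"
    using normal.inv_op_closed1[OF normal] normal_imp_subgroup[OF normal] e e' x xG vG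
    by (simp add: subgroup.m_closed subgroup.m_inv_closed)
  finally show ?thesis
    using normal.mult_inv_mem_iff_inv_mult_mem[OF normal] x xG by simp
qed

section \<open>Left-nilpotent braces\<close>

locale skew_brace = A: group A + M: group M for A M :: "'a monoid" +
  assumes carrier_eq: "carrier M = carrier A"
    and distrib: "\<And>a b c. a \<in> carrier A \<Longrightarrow> b \<in> carrier A \<Longrightarrow> c \<in> carrier A \<Longrightarrow>
      a \<otimes>\<^bsub>M\<^esub> (b \<otimes>\<^bsub>A\<^esub> c) = (a \<otimes>\<^bsub>M\<^esub> b) \<otimes>\<^bsub>A\<^esub> inv\<^bsub>A\<^esub> a \<otimes>\<^bsub>A\<^esub> (a \<otimes>\<^bsub>M\<^esub> c)"

lemma brace_imp_skew_brace: "brace A M \<Longrightarrow> skew_brace A M"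
  unfolding brace_def skew_brace_def skew_brace_axioms_def by auto

lemma brace_star_iterate_mem_left_series:
  assumes "b \<in> carrier A" "x \<in> carrier A"
  shows "(brace_star A M b ^^ k) x \<in> left_series A M k"
proof (induction k)
  case 0
  then show ?case using assms(2) by simp
next
  case (Suc k)
  then have "brace_star A M b ((brace_star A M b ^^ k) x)
      \<in> (\<lambda>(x, y). brace_star A M x y) ` (carrier A \<times> left_series A M k)"
    using assms(1) by force
  then show ?case by (simp add: brace_star_set_def generate.incl)
qed

context skew_brace
begin

abbreviation lam :: "'a \<Rightarrow> 'a \<Rightarrow> 'a" where "lam \<equiv> brace_lambda A M"

lemma mult_closed [simp]: "a \<in> carrier A \<Longrightarrow> b \<in> carrier A \<Longrightarrow> a \<otimes>\<^bsub>M\<^esub> b \<in> carrier A"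
  using M.m_closed carrier_eq by auto

lemma inv_closed [simp]: "a \<in> carrier A \<Longrightarrow> inv\<^bsub>M\<^esub> a \<in> carrier A"
  using M.inv_closed carrier_eq by auto

lemma one_eq: "\<one>\<^bsub>M\<^esub> = \<one>\<^bsub>A\<^esub>"
proof -
  have one: "\<one>\<^bsub>M\<^esub> \<in> carrier A" and "\<one>\<^bsub>M\<^esub> \<otimes>\<^bsub>M\<^esub> \<one>\<^bsub>A\<^esub> = \<one>\<^bsub>A\<^esub>"
    using carrier_eq by auto
  then have "\<one>\<^bsub>A\<^esub> = inv\<^bsub>A\<^esub> \<one>\<^bsub>M\<^esub>"
    using distrib[OF one A.one_closed A.one_closed] by simp
  then show ?thesis using one by (metis A.inv_inv A.inv_one)
qed

lemma lambda_closed [simp]: "a \<in> carrier A \<Longrightarrow> b \<in> carrier A \<Longrightarrow> lam a b \<in> carrier A"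
  unfolding brace_lambda_def by simp

lemma lambda_mult_add:
  "a \<in> carrier A \<Longrightarrow> b \<in> carrier A \<Longrightarrow> c \<in> carrier A \<Longrightarrow>
    lam a (b \<otimes>\<^bsub>A\<^esub> c) = lam a b \<otimes>\<^bsub>A\<^esub> lam a c"
  unfolding brace_lambda_def using distrib by (simp add: A.m_assoc)

lemma lambda_hom: "a \<in> carrier A \<Longrightarrow> lam a \<in> hom A A"
  by (auto intro!: homI simp: lambda_mult_add)

lemma lambda_inv: "a \<in> carrier A \<Longrightarrow> b \<in> carrier A \<Longrightarrow> lam a (inv\<^bsub>A\<^esub> b) = inv\<^bsub>A\<^esub> lam a b"
  using group_hom.hom_inv[of A A "lam a" b] lambda_hom A.group_axioms
  by (simp add: group_hom_def group_hom_axioms_def)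

lemma lambda_one: "b \<in> carrier A \<Longrightarrow> lam \<one>\<^bsub>M\<^esub> b = b"
  unfolding brace_lambda_def using carrier_eq one_eq by simp

lemma lambda_mult:
  assumes "a \<in> carrier A" "b \<in> carrier A" "c \<in> carrier A"
  shows "lam (a \<otimes>\<^bsub>M\<^esub> b) c = lam a (lam b c)"
proof -
  have "lam a (lam b c) = lam a (inv\<^bsub>A\<^esub> b) \<otimes>\<^bsub>A\<^esub> lam a (b \<otimes>\<^bsub>M\<^esub> c)"
    unfolding brace_lambda_def[of A M b c] using lambda_mult_add assms by simp
  also have "\<dots> = inv\<^bsub>A\<^esub> (inv\<^bsub>A\<^esub> a \<otimes>\<^bsub>A\<^esub> (a \<otimes>\<^bsub>M\<^esub> b))
      \<otimes>\<^bsub>A\<^esub> (inv\<^bsub>A\<^esub> a \<otimes>\<^bsub>A\<^esub> (a \<otimes>\<^bsub>M\<^esub> (b \<otimes>\<^bsub>M\<^esub> c)))"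
    using lambda_inv assms by (simp add: brace_lambda_def)
  also have "\<dots> = inv\<^bsub>A\<^esub> (a \<otimes>\<^bsub>M\<^esub> b) \<otimes>\<^bsub>A\<^esub> ((a \<otimes>\<^bsub>M\<^esub> b) \<otimes>\<^bsub>M\<^esub> c)"
    using assms carrier_eq
    by (simp add: A.inv_mult_group A.m_assoc M.m_assoc flip: A.m_assoc[of a "inv\<^bsub>A\<^esub> a"])
  finally show ?thesis unfolding brace_lambda_def by simp
qed

lemma brace_star_eq: "brace_star A M a b = lam a b \<otimes>\<^bsub>A\<^esub> inv\<^bsub>A\<^esub> b"
  unfolding brace_star_def brace_lambda_def ..

lemma brace_ideal_normal: "brace_ideal A M I \<Longrightarrow> I \<lhd> A"
  unfolding brace_ideal_def by blast

lemma brace_ideal_lambda_closed: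
  "brace_ideal A M I \<Longrightarrow> b \<in> carrier A \<Longrightarrow> x \<in> I \<Longrightarrow> lam b x \<in> I"
  unfolding brace_ideal_def by blast

lemma left_nilpotent_lambda_trivial_on_cyclic_factor:
  assumes "left_nilpotent A M" and J: "brace_ideal A M J" and K: "brace_ideal A M K"
    and cyclic: "infinite_or_prime_cyclic (A Mod J) ((#>\<^bsub>A\<^esub>) J ` K)"
    and b: "b \<in> carrier A" and x: "x \<in> K"
  shows "lam b x \<otimes>\<^bsub>A\<^esub> inv\<^bsub>A\<^esub> x \<in> J"
proof (rule ccontr)
  assume moved: "lam b x \<otimes>\<^bsub>A\<^esub> inv\<^bsub>A\<^esub> x \<notin> J"
  interpret J: normal J A using brace_ideal_normal[OF J] .
  have K_sub: "subgroup K A" using brace_ideal_normal[OF K] normal_imp_subgroup by blast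
  have KA: "K \<subseteq> carrier A" using subgroup.subset[OF K_sub] .
  obtain m where m: "left_series A M m = {\<one>\<^bsub>A\<^esub>}"
    using assms(1) unfolding left_nilpotent_def by blast
  let ?s = "\<lambda>k. (brace_star A M b ^^ k) x"
  have "?s k \<in> K \<and> ?s k \<notin> J" for k
  proof (induction k)
    case 0
    have "x \<notin> J"
      using moved brace_ideal_lambda_closed[OF J b] J.m_closed J.m_inv_closed by blast
    then show ?case using x by simp
  next
    case (Suc k)
    then have sK: "?s k \<in> K" and sJ: "?s k \<notin> J" by auto
    have step: "?s (Suc k) = lam b (?s k) \<otimes>\<^bsub>A\<^esub> inv\<^bsub>A\<^esub> ?s k"
      by (simp add: brace_star_eq)
    have "lam b (?s k) \<otimes>\<^bsub>A\<^esub> inv\<^bsub>A\<^esub> ?s k \<in> K"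
      using sK brace_ideal_lambda_closed[OF K b]
        subgroup.m_closed[OF K_sub] subgroup.m_inv_closed[OF K_sub]
      by blast
    moreover have "lam b (?s k) \<otimes>\<^bsub>A\<^esub> inv\<^bsub>A\<^esub> ?s k \<notin> J"
      using J.cyclic_factor_endo_fixed_point_free[OF lambda_hom[OF b]
          image_subsetI[OF brace_ideal_lambda_closed[OF J b]] K_sub
          image_subsetI[OF brace_ideal_lambda_closed[OF K b]] cyclic x moved sK sJ] .
    ultimately show ?case unfolding step by blast
  qed
  then have "?s m \<notin> J" by blast
  moreover have "?s m = \<one>\<^bsub>A\<^esub>"
    using brace_star_iterate_mem_left_series[OF b subsetD[OF KA x], where M = M and k = m] m by simp
  ultimately show False using J.one_closed by simp
qed

end

locale brace_ideal_series = skew_brace +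
  fixes I :: "nat \<Rightarrow> 'a set" and n :: nat
  assumes ideal: "\<And>i. i \<le> n \<Longrightarrow> brace_ideal A M (I i)"
    and bottom: "I 0 = {\<one>\<^bsub>A\<^esub>}"
    and top: "I n = carrier A"
begin

lemma series_subgroup: "i \<le> n \<Longrightarrow> subgroup (I i) A"
  using ideal brace_ideal_normal normal_imp_subgroup by blast

lemma series_subset: "i \<le> n \<Longrightarrow> I i \<subseteq> carrier A"
  using series_subgroup subgroup.subset by blast

lemma lambda_lowers_series_zero:
  assumes b: "b \<in> carrier A"
  shows "lowers_series A I n 0 (lam b)"
  unfolding lowers_series_def
proof (intro allI impI)
  fix j x assume "j + 0 \<le> n" "x \<in> I (j + 0)"
  then have j: "j \<le> n" and x: "x \<in> I j" by simp_all
  then have "lam b x \<in> I j" using brace_ideal_lambda_closed[OF ideal b] by blast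
  then show "lam b x \<otimes>\<^bsub>A\<^esub> inv\<^bsub>A\<^esub> x \<in> I j"
    using x subgroup.m_closed[OF series_subgroup[OF j]]
      subgroup.m_inv_closed[OF series_subgroup[OF j]]
    by blast
qed

lemma lambda_lowers_whole_series_imp_ker:
  assumes b: "b \<in> carrier A" and lowers: "lowers_series A I n n (lam b)"
  shows "b \<in> brace_ker_lambda A M"
proof -
  have "lam b x = x" if x: "x \<in> carrier A" for x
  proof -
    have "lam b x \<otimes>\<^bsub>A\<^esub> inv\<^bsub>A\<^esub> x \<in> I 0"
      using lowers x top unfolding lowers_series_def by (metis add_0 order_refl)
    then show ?thesis using b x bottom by (simp add: A.inv_solve_right')
  qed
  then show ?thesis unfolding brace_ker_lambda_def using b by simp
qed

lemma lambda_commutator_lowers_series: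
  assumes b: "b \<in> carrier A" "lowers_series A I n a (lam b)"
    and y: "y \<in> carrier A" "lowers_series A I n 1 (lam y)"
  shows "lowers_series A I n (Suc a) (lam (b \<otimes>\<^bsub>M\<^esub> y \<otimes>\<^bsub>M\<^esub> inv\<^bsub>M\<^esub> b \<otimes>\<^bsub>M\<^esub> inv\<^bsub>M\<^esub> y))"
  unfolding lowers_series_def
proof (intro allI impI)
  fix j z assume j: "j + Suc a \<le> n" and z: "z \<in> I (j + Suc a)"
  have zA: "z \<in> carrier A" using series_subset j z by blast
  define x where "x = lam (inv\<^bsub>M\<^esub> b) (lam (inv\<^bsub>M\<^esub> y) z)"
  have x: "x \<in> I (j + Suc a)"
    unfolding x_def using brace_ideal_lambda_closed[OF ideal[OF j]] b y z by simp
  have commutator: "lam (b \<otimes>\<^bsub>M\<^esub> y \<otimes>\<^bsub>M\<^esub> inv\<^bsub>M\<^esub> b \<otimes>\<^bsub>M\<^esub> inv\<^bsub>M\<^esub> y) z = lam b (lam y x)"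
    unfolding x_def using b y zA by (simp add: lambda_mult)
  have "lam y (lam b x) = lam (y \<otimes>\<^bsub>M\<^esub> b \<otimes>\<^bsub>M\<^esub> inv\<^bsub>M\<^esub> b \<otimes>\<^bsub>M\<^esub> inv\<^bsub>M\<^esub> y) z"
    unfolding x_def using b y zA by (simp add: lambda_mult)
  also have "\<dots> = z"
    using b y zA carrier_eq by (simp add: M.m_assoc lambda_one)
  finally have "lam y (lam b x) = z" .
  then show "lam (b \<otimes>\<^bsub>M\<^esub> y \<otimes>\<^bsub>M\<^esub> inv\<^bsub>M\<^esub> b \<otimes>\<^bsub>M\<^esub> inv\<^bsub>M\<^esub> y) z \<otimes>\<^bsub>A\<^esub> inv\<^bsub>A\<^esub> z \<in> I j"
    using commutator A.lowers_series_commutator[OF brace_ideal_normal[OF ideal]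
        lambda_hom[OF b(1)] b(2) lambda_hom[OF y(1)] y(2) j x]
    by simp
qed

lemma left_nilpotent_imp_lambda_lowers_series:
  assumes "left_nilpotent A M"
    and cyclic: "\<And>i. i < n \<Longrightarrow> infinite_or_prime_cyclic (A Mod I i) ((#>\<^bsub>A\<^esub>) (I i) ` I (Suc i))"
    and "b \<in> carrier A"
  shows "lowers_series A I n 1 (lam b)"
  unfolding lowers_series_def
  using left_nilpotent_lambda_trivial_on_cyclic_factor[OF assms(1) ideal ideal cyclic assms(3)] by simp

lemma lambda_lowers_series_imp_nilpotent:
  assumes lowers: "\<And>b. b \<in> carrier A \<Longrightarrow> lowers_series A I n 1 (lam b)"
    and ker: "brace_ker_lambda A M \<subseteq> upper_central M N"
  shows "nilpotent_group M"
proof -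
  have "b \<in> upper_central M (N + k)"
    if "k \<le> n" "b \<in> carrier A" "lowers_series A I n (n - k) (lam b)" for k b
    using that
  proof (induction k arbitrary: b)
    case 0
    then show ?case using ker lambda_lowers_whole_series_imp_ker by auto
  next
    case (Suc k)
    have "b \<otimes>\<^bsub>M\<^esub> y \<otimes>\<^bsub>M\<^esub> inv\<^bsub>M\<^esub> b \<otimes>\<^bsub>M\<^esub> inv\<^bsub>M\<^esub> y \<in> upper_central M (N + k)"
      if "y \<in> carrier M" for y
    proof -
      have y: "y \<in> carrier A" using that carrier_eq by simp
      have "Suc (n - Suc k) = n - k" using Suc.prems(1) by simp
      then show ?thesis
        using Suc.IH lambda_commutator_lowers_series[OF Suc.prems(2,3) y lowers[OF y]] Suc.prems(1,2) y
        by simp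
    qed
    then show ?case using Suc.prems(2) carrier_eq by simp
  qed
  then have "carrier M \<subseteq> upper_central M (N + n)"
    using lambda_lowers_series_zero carrier_eq by auto
  moreover have "upper_central M c \<subseteq> carrier M" for c
    by (cases c) auto
  ultimately show ?thesis
    unfolding nilpotent_group_def using M.group_axioms by blast
qed

end

theorem theorem3p32:
  fixes A M :: "'a monoid"
  assumes "supersoluble_brace A M"
    and "left_nilpotent A M"
    and "\<exists>n. brace_ker_lambda A M \<subseteq> upper_central M n"
  shows "nilpotent_group M"
proof -
  interpret skew_brace A M
    using assms(1) brace_imp_skew_brace unfolding supersoluble_brace_def by blast
  obtain I n where series: "I 0 = {\<one>\<^bsub>A\<^esub>}" "I n = carrier A" "\<forall>i\<le>n. brace_ideal A M (I i)"
    and factors: "\<forall>i<n. I i \<subseteq> I (Suc i) \<and>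
      (let F = quot_sub A (I i) (I (Suc i)) in
        (infinite F \<and> (\<exists>g\<in>F. generate (quot_add A (I i)) {g} = F) \<and>
          F \<subseteq> brace_soc (quot_add A (I i)) (quot_mult A M (I i)))
        \<or> Factorial_Ring.prime (card F))"
    using assms(1) unfolding supersoluble_brace_def by blast
  interpret brace_ideal_series A M I n
    using series by unfold_locales auto
  have "infinite_or_prime_cyclic (A Mod I i) ((#>\<^bsub>A\<^esub>) (I i) ` I (Suc i))" if "i < n" for i
    using factors that unfolding infinite_or_prime_cyclic_def quot_sub_def quot_add_def Let_def
    by blast
  moreover obtain N where "brace_ker_lambda A M \<subseteq> upper_central M N"
    using assms(3) by blast
  ultimately show ?thesis
    using lambda_lowers_series_imp_nilpotent left_nilpotent_imp_lambda_lowers_series[OF assms(2)]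
    by blast
qed

end
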